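(* Let $(\mathcal{P},\cdot)$ be an admissible Poisson algebra and let $\varphi:\mathcal{P}\times\mathcal{P}\to\mathcal{P}$ be a skew-symmetric bilinear map which is a derivation of $\bullet$ in each argument, i.e. $\varphi(X\bullet Y,Z)=X\bullet\varphi(Y,Z)+\varphi(X,Z)\bullet Y$ for all $X,Y,Z$ (a Lichnerowicz-Poisson $2$-cochain). Then $\delta_{LP}\varphi=0$ if and only if $\delta^2_{\mathcal{P}}\varphi=0$.
   Context: $\mathbb{K}$ is a field of characteristic different from $2$ and $3$. Associator: $A(X,Y,Z)=(X\cdot Y)\cdot Z-X\cdot(Y\cdot Z)$. An admissible Poisson algebra is a $\mathbb{K}$-vector space $\mathcal{P}$ with a bilinear product $\cdot$ satisfying $3A(X,Y,Z)=(X\cdot Z)\cdot Y+(Y\cdot Z)\cdot X-(Y\cdot X)\cdot Z-(Z\cdot X)\cdot Y$; $\{X,Y\}=\frac12(X\cdot Y-Y\cdot X)$, $X\bullet Y=\frac12(X\cdot Y+Y\cdot X)$. Lichnerowicz-Poisson differential on a skew-symmetric bilinear $\varphi$: $\delta_{LP}\varphi(X_0,X_1,X_2)=\sum_{i=0}^2(-1)^i\{X_i,\varphi(X_0,\dots,\widehat{X_i},\dots,X_2)\}+\sum_{0\le i<j\le2}(-1)^{i+j}\varphi(\{X_i,X_j\},X_k)$ where $k$ is the remaining index. Poisson differential: $\delta^2_{\mathcal{P}}\varphi(X,Y,Z)=3\varphi(X\cdot Y,Z)-3\varphi(X,Y\cdot Z)-\varphi(X\cdot Z,Y)-\varphi(Y\cdot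 Z,X)+\varphi(Y\cdot X,Z)+\varphi(Z\cdot X,Y)+3\varphi(X,Y)\cdot Z-3X\cdot\varphi(Y,Z)-\varphi(X,Z)\cdot Y-\varphi(Y,Z)\cdot X+\varphi(Y,X)\cdot Z+\varphi(Z,X)\cdot Y$. *)

theory Defs
  imports Complex_Main
begin

definition bilinear_op :: "('k::field \<Rightarrow> 'p::ab_group_add \<Rightarrow> 'p) \<Rightarrow> ('p \<Rightarrow> 'p \<Rightarrow> 'p) \<Rightarrow> bool" where
  "bilinear_op sc m \<longleftrightarrow>
     (\<forall>x y z. m (x + y) z = m x z + m y z) \<and>
     (\<forall>x y z. m x (y + z) = m x y + m x z) \<and>
     (\<forall>a x y. m (sc a x) y = sc a (m x y)) \<and>
     (\<forall>a x y. m x (sc a y) = sc a (m x y))"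

definition assoc :: "('p \<Rightarrow> 'p \<Rightarrow> 'p) \<Rightarrow> 'p \<Rightarrow> 'p \<Rightarrow> 'p \<Rightarrow> 'p::ab_group_add" where
  "assoc m X Y Z = m (m X Y) Z - m X (m Y Z)"

definition admissible_poisson :: "('k::field \<Rightarrow> 'p::ab_group_add \<Rightarrow> 'p) \<Rightarrow> ('p \<Rightarrow> 'p \<Rightarrow> 'p) \<Rightarrow> bool" where
  "admissible_poisson sc m \<longleftrightarrow>
     vector_space sc \<and> bilinear_op sc m \<and>
     (\<forall>X Y Z. sc 3 (assoc m X Y Z) =
        m (m X Z) Y + m (m Y Z) X - m (m Y X) Z - m (m Z X) Y)"

definition pbracket :: "('k::field \<Rightarrow> 'p::ab_group_add \<Rightarrow> 'p) \<Rightarrow> ('p \<Rightarrow> 'p \<Rightarrow> 'p) \<Rightarrow> 'p \<Rightarrow> 'p \<Rightarrow> 'p" where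
  "pbracket sc m X Y = sc (inverse 2) (m X Y - m Y X)"

definition pbullet :: "('k::field \<Rightarrow> 'p::ab_group_add \<Rightarrow> 'p) \<Rightarrow> ('p \<Rightarrow> 'p \<Rightarrow> 'p) \<Rightarrow> 'p \<Rightarrow> 'p \<Rightarrow> 'p" where
  "pbullet sc m X Y = sc (inverse 2) (m X Y + m Y X)"

definition delta_LP :: "('k::field \<Rightarrow> 'p::ab_group_add \<Rightarrow> 'p) \<Rightarrow> ('p \<Rightarrow> 'p \<Rightarrow> 'p) \<Rightarrow> ('p \<Rightarrow> 'p \<Rightarrow> 'p) \<Rightarrow> 'p \<Rightarrow> 'p \<Rightarrow> 'p \<Rightarrow> 'p" where
  "delta_LP sc m \<phi> X0 X1 X2 =
     pbracket sc m X0 (\<phi> X1 X2) - pbracket sc m X1 (\<phi> X0 X2) + pbracket sc m X2 (\<phi> X0 X1)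
     - \<phi> (pbracket sc m X0 X1) X2 + \<phi> (pbracket sc m X0 X2) X1 - \<phi> (pbracket sc m X1 X2) X0"

definition delta_P2 :: "('k::field \<Rightarrow> 'p::ab_group_add \<Rightarrow> 'p) \<Rightarrow> ('p \<Rightarrow> 'p \<Rightarrow> 'p) \<Rightarrow> ('p \<Rightarrow> 'p \<Rightarrow> 'p) \<Rightarrow> 'p \<Rightarrow> 'p \<Rightarrow> 'p \<Rightarrow> 'p" where
  "delta_P2 sc m \<phi> X Y Z =
     sc 3 (\<phi> (m X Y) Z) - sc 3 (\<phi> X (m Y Z)) - \<phi> (m X Z) Y - \<phi> (m Y Z) X
     + \<phi> (m Y X) Z + \<phi> (m Z X) Y
     + sc 3 (m (\<phi> X Y) Z) - sc 3 (m X (\<phi> Y Z)) - m (\<phi> X Z) Y - m (\<phi> Y Z) X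
     + m (\<phi> Y X) Z + m (\<phi> Z X) Y"

end

theory Submission
  imports Defs
begin

text \<open>Both differentials expand into terms \<open>\<phi>(U V, W)\<close>, \<open>U \<phi>(V, W)\<close> and
  \<open>\<phi>(U, V) W\<close>. As \<open>\<phi>\<close> is a derivation of the symmetrized product, \<open>\<phi>(Y X, Z)\<close> equals
  \<open>-\<phi>(X Y, Z)\<close> plus products with \<open>\<phi>\<close>; substituting this and using skew-symmetry gives
  \<open>\<delta>\<^sup>2\<^sub>P \<phi> = -2 \<delta>\<^sub>L\<^sub>P \<phi>\<close>, and \<open>2 \<noteq> 0\<close> yields the equivalence.\<close>

lemma bilinear_op_laws:
  assumes "bilinear_op sc m"
  shows bilinear_op_add_left: "m (x + y) z = m x z + m y z"
    and bilinear_op_add_right: "m x (y + z) = m x y + m x z"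
    and bilinear_op_minus_left: "m (- x) z = - m x z"
    and bilinear_op_minus_right: "m x (- z) = - m x z"
    and bilinear_op_diff_left: "m (x - y) z = m x z - m y z"
    and bilinear_op_diff_right: "m x (y - z) = m x y - m x z"
    and bilinear_op_scale_left: "m (sc a x) z = sc a (m x z)"
    and bilinear_op_scale_right: "m x (sc a z) = sc a (m x z)"
proof -
  have ladd: "\<And>x y z. m (x + y) z = m x z + m y z" and radd: "\<And>x y z. m x (y + z) = m x y + m x z"
    using assms unfolding bilinear_op_def by auto
  interpret left: additive "\<lambda>x. m x z" by standard (rule ladd)
  interpret right: additive "\<lambda>z. m x z" by standard (rule radd)
  show "m (x + y) z = m x z + m y z" "m x (y + z) = m x y + m x z"
    by (rule ladd, rule radd)
  show "m (- x) z = - m x z" "m x (- z) = - m x z"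
    by (rule left.minus, rule right.minus)
  show "m (x - y) z = m x z - m y z" "m x (y - z) = m x y - m x z"
    by (rule left.diff, rule right.diff)
  show "m (sc a x) z = sc a (m x z)" "m x (sc a z) = sc a (m x z)"
    using assms unfolding bilinear_op_def by auto
qed

locale lp_cochain = vector_space sc for sc :: "'k::field \<Rightarrow> 'p::ab_group_add \<Rightarrow> 'p" +
  fixes m :: "'p \<Rightarrow> 'p \<Rightarrow> 'p" and \<phi> :: "'p \<Rightarrow> 'p \<Rightarrow> 'p"
  assumes two_nonzero: "(2::'k) \<noteq> 0"
    and bilinear_m: "bilinear_op sc m"
    and bilinear_\<phi>: "bilinear_op sc \<phi>"
    and skew: "\<phi> X Y = - \<phi> Y X"
    and derivation: "\<phi> (pbullet sc m X Y) Z = pbullet sc m X (\<phi> Y Z) + pbullet sc m (\<phi> X Z) Y"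
begin

lemma scale_two_half: "sc 2 (sc (inverse 2) x) = x"
  using two_nonzero by simp

lemma scale_three: "sc 3 x = x + x + x"
proof -
  have "sc 3 x = sc (1 + 1 + 1) x" by simp
  then show ?thesis by (simp only: scale_left_distrib scale_one)
qed

lemma scale_two_pbracket: "sc 2 (pbracket sc m U V) = m U V - m V U"
  unfolding pbracket_def by (rule scale_two_half)

lemma scale_two_pbullet: "sc 2 (pbullet sc m U V) = m U V + m V U"
  unfolding pbullet_def by (rule scale_two_half)

lemma \<phi>_swap_product:
  "\<phi> (m Y X) Z = m X (\<phi> Y Z) + m (\<phi> Y Z) X + m (\<phi> X Z) Y + m Y (\<phi> X Z) - \<phi> (m X Y) Z"
proof -
  have "\<phi> (m X Y) Z + \<phi> (m Y X) Z = \<phi> (sc 2 (pbullet sc m X Y)) Z"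
    by (simp only: scale_two_pbullet bilinear_op_add_left[OF bilinear_\<phi>])
  also have "\<dots> = sc 2 (pbullet sc m X (\<phi> Y Z) + pbullet sc m (\<phi> X Z) Y)"
    by (simp only: bilinear_op_scale_left[OF bilinear_\<phi>] derivation)
  also have "\<dots> = m X (\<phi> Y Z) + m (\<phi> Y Z) X + (m (\<phi> X Z) Y + m Y (\<phi> X Z))"
    by (simp only: scale_right_distrib scale_two_pbullet)
  finally show ?thesis by (simp add: algebra_simps)
qed

lemma scale_two_delta_LP:
  "sc 2 (delta_LP sc m \<phi> X Y Z) =
     (m X (\<phi> Y Z) - m (\<phi> Y Z) X) - (m Y (\<phi> X Z) - m (\<phi> X Z) Y) + (m Z (\<phi> X Y) - m (\<phi> X Y) Z)
     - (\<phi> (m X Y) Z - \<phi> (m Y X) Z) + (\<phi> (m X Z) Y - \<phi> (m Z X) Y) - (\<phi> (m Y Z) X - \<phi> (m Z Y) X)"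
proof -
  have "\<phi> (sc 2 (pbracket sc m U V)) W = \<phi> (m U V) W - \<phi> (m V U) W" for U V W
    by (simp add: scale_two_pbracket bilinear_op_diff_left[OF bilinear_\<phi>])
  then show ?thesis
    unfolding delta_LP_def
    by (simp only: scale_right_diff_distrib scale_right_distrib scale_two_pbracket
        bilinear_op_scale_left[OF bilinear_\<phi>, symmetric] bilinear_op_diff_left[OF bilinear_\<phi>])
qed

lemma delta_P2_eq_neg_scale_two_delta_LP:
  "delta_P2 sc m \<phi> X Y Z = - sc 2 (delta_LP sc m \<phi> X Y Z)"
proof -
  have skews: "\<phi> X (m Y Z) = - \<phi> (m Y Z) X" "\<phi> Y X = - \<phi> X Y" "\<phi> Z X = - \<phi> X Z"
    "\<phi> Y (m X Z) = - \<phi> (m X Z) Y" "\<phi> Z (m X Y) = - \<phi> (m X Y) Z" "\<phi> Z Y = - \<phi> Y Z"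
    by (rule skew)+
  show ?thesis
    unfolding scale_two_delta_LP delta_P2_def scale_three
    by (simp only: skews bilinear_op_minus_left[OF bilinear_m]
      bilinear_op_minus_right[OF bilinear_m] \<phi>_swap_product[of X Y Z] \<phi>_swap_product[of Y Z X])
      (simp add: algebra_simps)
qed

end

theorem mainTheorem18:
  fixes sc :: "'k::field \<Rightarrow> 'p::ab_group_add \<Rightarrow> 'p"
    and m :: "'p \<Rightarrow> 'p \<Rightarrow> 'p"
    and \<phi> :: "'p \<Rightarrow> 'p \<Rightarrow> 'p"
  assumes char2: "(2::'k) \<noteq> 0" and char3: "(3::'k) \<noteq> 0"
    and adm: "admissible_poisson sc m"
    and bil: "bilinear_op sc \<phi>"
    and skew: "\<forall>X Y. \<phi> X Y = - \<phi> Y X"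
    and der: "\<forall>X Y Z. \<phi> (pbullet sc m X Y) Z = pbullet sc m X (\<phi> Y Z) + pbullet sc m (\<phi> X Z) Y"
  shows "(\<forall>X Y Z. delta_LP sc m \<phi> X Y Z = 0) \<longleftrightarrow> (\<forall>X Y Z. delta_P2 sc m \<phi> X Y Z = 0)"
proof -
  have "vector_space sc" "bilinear_op sc m"
    using adm unfolding admissible_poisson_def by auto
  then interpret lp_cochain sc m \<phi>
    by (intro lp_cochain.intro lp_cochain_axioms.intro) (use char2 bil skew der in blast)+
  show ?thesis
    using delta_P2_eq_neg_scale_two_delta_LP char2 by simp
qed

end
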